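(* Let $A$ be a Banach algebra with $\mathrm{Ann}_l(A)=\{0\}$ and let $a_0\in Z(A)\setminus\{0\}$. Then for each integer $n\geq 3$, $S_{n}(A)$ is a commutative Banach subalgebra of $B(A)$.
   Context: $Z(A)$ is the center of $A$; $\mathrm{Ann}_l(A)=\{a\in A: ab=0\text{ for all }b\in A\}$. $Mul_n(A)$ is the set of bounded linear maps $T:A\to A$ with $T(a_1\cdots a_n)=a_1T(a_2\cdots a_n)=T(a_1\cdots a_{n-1})a_n$ for all $a_i\in A$. For $T\in Mul_n(A)$ let $T_{a_0,n}\in B(A)$ be $T_{a_0,n}(a)=T(a_0^{n-2}a)$; $M_{a_0,n}(A)=\{T_{a_0,n}:T\in Mul_n(A)\}$, and $S_n(A)$ is the closure of $M_{a_0,n}(A)$ in $B(A)$ in the operator norm. *)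

theory Defs
  imports "HOL-Analysis.Analysis"
begin

text \<open>Ordered product of a nonempty list in a (possibly non-unital) algebra.\<close>
fun lprod :: "'a::times list \<Rightarrow> 'a" where
  "lprod [] = undefined"
| "lprod [x] = x"
| "lprod (x # y # xs) = x * lprod (y # xs)"

definition center :: "'a::times set" where
  "center = {z. \<forall>a. z * a = a * z}"

definition left_ann :: "'a::{times,zero} set" where
  "left_ann = {a. \<forall>b. a * b = 0}"

definition Mul_n :: "nat \<Rightarrow> ('a::real_normed_algebra \<Rightarrow>\<^sub>L 'a) set" where
  "Mul_n n = {T. \<forall>xs::'a list. length xs = n \<longrightarrow>
      blinfun_apply T (lprod xs) = hd xs * blinfun_apply T (lprod (tl xs)) \<and>
      blinfun_apply T (lprod xs) = blinfun_apply T (lprod (butlast xs)) * last xs}"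

definition T_a0n :: "'a::real_normed_algebra \<Rightarrow> nat \<Rightarrow> ('a \<Rightarrow>\<^sub>L 'a) \<Rightarrow> ('a \<Rightarrow>\<^sub>L 'a)" where
  "T_a0n a0 n T = T o\<^sub>L blinfun_mult_right (lprod (replicate (n - 2) a0))"

definition M_a0n :: "'a::real_normed_algebra \<Rightarrow> nat \<Rightarrow> ('a \<Rightarrow>\<^sub>L 'a) set" where
  "M_a0n a0 n = T_a0n a0 n ` Mul_n n"

definition S_n :: "'a::real_normed_algebra \<Rightarrow> nat \<Rightarrow> ('a \<Rightarrow>\<^sub>L 'a) set" where
  "S_n a0 n = closure (M_a0n a0 n)"

text \<open>A commutative Banach subalgebra of B(A): a closed (hence complete) linear
  subspace closed under composition, whose elements commute.\<close>
definition comm_banach_subalgebra :: "('a::real_normed_vector \<Rightarrow>\<^sub>L 'a) set \<Rightarrow> bool" where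
  "comm_banach_subalgebra S \<longleftrightarrow>
     subspace S \<and> closed S \<and>
     (\<forall>T\<in>S. \<forall>U\<in>S. T o\<^sub>L U \<in> S) \<and>
     (\<forall>T\<in>S. \<forall>U\<in>S. T o\<^sub>L U = U o\<^sub>L T)"

end

theory Submission
  imports Defs
begin

(*
  Let c = a0^(n-2), a central element.  Every operator in M_a0n a0 n has the
  form T' = T o R_c (i.e. a |-> T(a c)) with T an n-multiplier, and the
  identities defining Mul_n n, applied to the words x a0...a0 y and
  a0...a0 x y, show that T' is a two-sided multiplier:
  T'(xy) = x T'(y) = T'(x) y.
*)

lemma lprod_Cons: "ys \<noteq> [] \<Longrightarrow> lprod (x # ys) = x * lprod ys"
  by (cases ys) auto

lemma lprod_append:
  "xs \<noteq> [] \<Longrightarrow> ys \<noteq> [] \<Longrightarrow> lprod (xs @ ys) = (lprod xs :: 'a::semigroup_mult) * lprod ys"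
  by (induction xs rule: induct_list012) (auto simp: lprod_Cons mult.assoc)

lemma center_mult:
  fixes a b :: "'a::semigroup_mult"
  assumes "a \<in> center" "b \<in> center"
  shows "a * b \<in> center"
proof -
  have a: "a * w = w * a" and b: "b * w = w * b" for w
    using assms by (simp_all add: center_def)
  have "a * b * z = z * (a * b)" for z
  proof -
    have "a * b * z = (a * z) * b" by (simp only: mult.assoc b)
    also have "\<dots> = z * (a * b)" by (simp only: a mult.assoc)
    finally show ?thesis .
  qed
  then show ?thesis by (simp add: center_def)
qed

lemma lprod_replicate_central:
  fixes a0 :: "'a::semigroup_mult"
  assumes "a0 \<in> center" and "k \<ge> 1"
  shows "lprod (replicate k a0) \<in> center"
  using assms(2)
proof (induction k rule: dec_induct)
  case base
  then show ?case using assms(1) by simp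
next
  case (step k)
  have "lprod (replicate (Suc k) a0) = a0 * lprod (replicate k a0)"
    using step.hyps by (cases k) auto
  then show ?case using center_mult[OF assms(1) step.IH] by simp
qed

definition multiplier :: "('a::times \<Rightarrow> 'a) \<Rightarrow> bool" where
  "multiplier f \<longleftrightarrow> (\<forall>x y. f (x * y) = x * f y \<and> f (x * y) = f x * y)"

text \<open>In an algebra without nonzero left annihilators, multipliers commute:
  both f(g a) b and g(f a) b equal f(a) g(b).\<close>
lemma multipliers_commute:
  fixes f g :: "'a::ring \<Rightarrow> 'a"
  assumes ann: "left_ann = ({0} :: 'a set)"
    and f: "multiplier f" and g: "multiplier g"
  shows "f (g a) = g (f a)"
proof -
  have fl: "f (x * y) = x * f y" and fr: "f (x * y) = f x * y"
    and gl: "g (x * y) = x * g y" and gr: "g (x * y) = g x * y" for x y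
    using f g unfolding multiplier_def by blast+
  have "(f (g a) - g (f a)) * b = 0" for b
  proof -
    have "f (g a) * b = f (g (a * b))" by (simp only: fr gr)
    also have "\<dots> = f a * g b" by (simp only: gl fr)
    finally have fg: "f (g a) * b = f a * g b" .
    have gf: "g (f a) * b = f a * g b" by (metis gl gr)
    from fg gf show ?thesis by (simp add: left_diff_distrib)
  qed
  then have "f (g a) - g (f a) \<in> left_ann" by (simp add: left_ann_def)
  with ann have "f (g a) - g (f a) = 0" by blast
  then show ?thesis by simp
qed

lemma Mul_nI:
  assumes "\<And>xs. length xs = n \<Longrightarrow>
      blinfun_apply T (lprod xs) = hd xs * blinfun_apply T (lprod (tl xs))"
    and "\<And>xs. length xs = n \<Longrightarrow>
      blinfun_apply T (lprod xs) = blinfun_apply T (lprod (butlast xs)) * last xs"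
  shows "T \<in> Mul_n n"
  using assms unfolding Mul_n_def by blast

lemma Mul_n_left:
  "T \<in> Mul_n n \<Longrightarrow> length xs = n \<Longrightarrow>
    blinfun_apply T (lprod xs) = hd xs * blinfun_apply T (lprod (tl xs))"
  unfolding Mul_n_def by blast

lemma Mul_n_right:
  "T \<in> Mul_n n \<Longrightarrow> length xs = n \<Longrightarrow>
    blinfun_apply T (lprod xs) = blinfun_apply T (lprod (butlast xs)) * last xs"
  unfolding Mul_n_def by blast

lemma Mul_n_subspace: "subspace (Mul_n n :: ('a::real_normed_algebra \<Rightarrow>\<^sub>L 'a) set)"
  unfolding subspace_def
proof (intro conjI ballI allI)
  show "0 \<in> Mul_n n" by (simp add: Mul_n_def)
  show "T + U \<in> Mul_n n" if T: "T \<in> Mul_n n" and U: "U \<in> Mul_n n" for T U :: "'a \<Rightarrow>\<^sub>L 'a"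
  proof (rule Mul_nI)
    fix xs :: "'a list" assume len: "length xs = n"
    show "blinfun_apply (T + U) (lprod xs) = hd xs * blinfun_apply (T + U) (lprod (tl xs))"
      using Mul_n_left[OF T len] Mul_n_left[OF U len] by (simp add: plus_blinfun.rep_eq distrib_left)
    show "blinfun_apply (T + U) (lprod xs) = blinfun_apply (T + U) (lprod (butlast xs)) * last xs"
      using Mul_n_right[OF T len] Mul_n_right[OF U len] by (simp add: plus_blinfun.rep_eq distrib_right)
  qed
  show "r *\<^sub>R T \<in> Mul_n n" if T: "T \<in> Mul_n n" for r and T :: "'a \<Rightarrow>\<^sub>L 'a"
  proof (rule Mul_nI)
    fix xs :: "'a list" assume len: "length xs = n"
    show "blinfun_apply (r *\<^sub>R T) (lprod xs) = hd xs * blinfun_apply (r *\<^sub>R T) (lprod (tl xs))"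
      using Mul_n_left[OF T len] by (simp add: scaleR_blinfun.rep_eq)
    show "blinfun_apply (r *\<^sub>R T) (lprod xs) =
        blinfun_apply (r *\<^sub>R T) (lprod (butlast xs)) * last xs"
      using Mul_n_right[OF T len] by (simp add: scaleR_blinfun.rep_eq)
  qed
qed

lemma multiplier_comp_Mul_n:
  assumes M: "multiplier (blinfun_apply M)" and U: "U \<in> Mul_n n"
  shows "M o\<^sub>L U \<in> Mul_n n"
proof (rule Mul_nI)
  fix xs :: "'a list" assume len: "length xs = n"
  have ml: "blinfun_apply M (x * y) = x * blinfun_apply M y"
    and mr: "blinfun_apply M (x * y) = blinfun_apply M x * y" for x y
    using M unfolding multiplier_def by blast+
  show "blinfun_apply (M o\<^sub>L U) (lprod xs) = hd xs * blinfun_apply (M o\<^sub>L U) (lprod (tl xs))"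
    using Mul_n_left[OF U len] by (simp add: ml)
  show "blinfun_apply (M o\<^sub>L U) (lprod xs) =
      blinfun_apply (M o\<^sub>L U) (lprod (butlast xs)) * last xs"
    using Mul_n_right[OF U len] by (simp add: mr)
qed

text \<open>For n \<ge> 3 and central a0, every T_{a0,n} with T an n-multiplier is a
  multiplier: with c = a0^(n-2), the defining identities of Mul_n applied to
  the words x a0...a0 y and a0...a0 x y give T(x c y) = x T(c y) and
  T(c x y) = T(c x) y.\<close>
lemma T_a0n_multiplier:
  fixes a0 :: "'a::real_normed_algebra"
  assumes cen: "a0 \<in> center" and n: "n \<ge> 3" and T: "T \<in> Mul_n n"
  shows "multiplier (blinfun_apply (T_a0n a0 n T))"
proof -
  define r where "r = replicate (n - 2) a0"
  define c where "c = lprod r"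
  have r_ne: "r \<noteq> []" and len_r: "length r = n - 2" using n by (simp_all add: r_def)
  have c_central: "c * z = z * c" for z
    using lprod_replicate_central[OF cen, of "n - 2"] n by (simp add: c_def r_def center_def)
  have apply_eq: "blinfun_apply (T_a0n a0 n T) a = blinfun_apply T (c * a)" for a
    by (simp add: T_a0n_def c_def r_def[symmetric] c_central)
  have T_left: "blinfun_apply T (x * (c * y)) = x * blinfun_apply T (c * y)" for x y
  proof -
    have "lprod (x # r @ [y]) = x * (c * y)" and "lprod (r @ [y]) = c * y"
      using r_ne by (simp_all add: lprod_Cons lprod_append c_def)
    with Mul_n_left[OF T, of "x # r @ [y]"] len_r n show ?thesis by simp
  qed
  have T_right: "blinfun_apply T ((c * x) * y) = blinfun_apply T (c * x) * y" for x y
  proof -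
    have "lprod (r @ [x, y]) = (c * x) * y" and "lprod (r @ [x]) = c * x"
      using r_ne by (simp_all add: lprod_append c_def mult.assoc)
    moreover have "butlast (r @ [x, y]) = r @ [x]" by (simp add: butlast_append)
    ultimately show ?thesis using Mul_n_right[OF T, of "r @ [x, y]"] len_r n by simp
  qed
  have "c * (x * y) = x * (c * y)" for x y by (metis c_central mult.assoc)
  then have "blinfun_apply T (c * (x * y)) = x * blinfun_apply T (c * y)" for x y
    by (simp add: T_left)
  moreover have "blinfun_apply T (c * (x * y)) = blinfun_apply T (c * x) * y" for x y
    using T_right by (simp add: mult.assoc)
  ultimately show ?thesis unfolding multiplier_def apply_eq by blast
qed

lemma T_a0n_linear: "linear (T_a0n a0 n)"
  by (intro linearI; rule blinfun_eqI; simp add: T_a0n_def plus_blinfun.rep_eq scaleR_blinfun.rep_eq)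

lemma T_a0n_comp: "T_a0n a0 n T o\<^sub>L T_a0n a0 n U = T_a0n a0 n (T_a0n a0 n T o\<^sub>L U)"
  unfolding T_a0n_def by (intro blinfun_eqI) simp

lemma M_a0n_subspace: "subspace (M_a0n a0 n)"
  unfolding M_a0n_def by (rule linear_subspace_image[OF T_a0n_linear Mul_n_subspace])

lemma M_a0n_comp_closed:
  assumes "a0 \<in> center" "n \<ge> 3" "T \<in> M_a0n a0 n" "U \<in> M_a0n a0 n"
  shows "T o\<^sub>L U \<in> M_a0n a0 n"
proof -
  obtain T' U' where T': "T' \<in> Mul_n n" "T = T_a0n a0 n T'"
    and U': "U' \<in> Mul_n n" "U = T_a0n a0 n U'"
    using assms(3,4) unfolding M_a0n_def by blast
  have "T_a0n a0 n T' o\<^sub>L U' \<in> Mul_n n"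
    by (rule multiplier_comp_Mul_n[OF T_a0n_multiplier[OF assms(1,2) T'(1)] U'(1)])
  then show ?thesis unfolding M_a0n_def T' U' T_a0n_comp by blast
qed

lemma M_a0n_commute:
  fixes a0 :: "'a::real_normed_algebra"
  assumes ann: "left_ann = ({0} :: 'a set)" and "a0 \<in> center" "n \<ge> 3"
    and "T \<in> M_a0n a0 n" "U \<in> M_a0n a0 n"
  shows "T o\<^sub>L U = U o\<^sub>L T"
proof -
  have "multiplier (blinfun_apply T)" "multiplier (blinfun_apply U)"
    using assms(4,5) T_a0n_multiplier[OF assms(2,3)] unfolding M_a0n_def by blast+
  then show ?thesis by (intro blinfun_eqI) (simp add: multipliers_commute[OF ann])
qed

lemma closure_closed_under_binop:
  assumes cont: "continuous_on UNIV (\<lambda>p. f (fst p) (snd p))"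
    and S: "\<And>x y. x \<in> S \<Longrightarrow> y \<in> S \<Longrightarrow> f x y \<in> S"
    and x: "x \<in> closure S" and y: "y \<in> closure S"
  shows "f x y \<in> closure S"
proof -
  have "(\<lambda>p. f (fst p) (snd p)) ` closure (S \<times> S) \<subseteq> closure S"
    using S closure_subset
    by (intro image_closure_subset continuous_on_subset[OF cont]) fastforce+
  moreover have "(x, y) \<in> closure (S \<times> S)" using x y by (simp add: closure_Times)
  ultimately show ?thesis by force
qed

lemma closure_preserves_identity:
  fixes f g :: "'a::topological_space \<Rightarrow> 'a \<Rightarrow> 'b::t2_space"
  assumes cf: "continuous_on UNIV (\<lambda>p. f (fst p) (snd p))"
    and cg: "continuous_on UNIV (\<lambda>p. g (fst p) (snd p))"
    and S: "\<And>x y. x \<in> S \<Longrightarrow> y \<in> S \<Longrightarrow> f x y = g x y"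
    and x: "x \<in> closure S" and y: "y \<in> closure S"
  shows "f x y = g x y"
proof -
  have "closure (S \<times> S) \<subseteq> {p. f (fst p) (snd p) = g (fst p) (snd p)}"
    using S by (intro closure_minimal closed_Collect_eq[OF cf cg]) auto
  moreover have "(x, y) \<in> closure (S \<times> S)" using x y by (simp add: closure_Times)
  ultimately show ?thesis by force
qed

lemma closure_subspace:
  fixes S :: "'a::real_normed_vector set"
  assumes "subspace S"
  shows "subspace (closure S)"
  unfolding subspace_def
proof (intro conjI ballI allI)
  show "0 \<in> closure S" using assms closure_subset subspace_0 by blast
  have cont_add: "continuous_on UNIV (\<lambda>p :: 'a \<times> 'a. fst p + snd p)"
    and cont_scale: "continuous_on UNIV (\<lambda>p :: 'a \<times> 'a. r *\<^sub>R fst p)" for r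
    by (intro continuous_intros)+
  show "x + y \<in> closure S" if "x \<in> closure S" "y \<in> closure S" for x y
    using closure_closed_under_binop[where f = "(+)", OF cont_add _ that]
      subspace_add[OF assms] by blast
  show "r *\<^sub>R x \<in> closure S" if "x \<in> closure S" for r x
    using closure_closed_under_binop[where f = "\<lambda>x y. r *\<^sub>R x", OF cont_scale _ that that]
      subspace_scale[OF assms] by blast
qed

theorem mainTheorem9:
  fixes a0 :: "'a::{real_normed_algebra, banach}" and n :: nat
  assumes "left_ann = ({0} :: 'a set)"
    and "a0 \<in> center" and "a0 \<noteq> 0"
    and "n \<ge> 3"
  shows "comm_banach_subalgebra (S_n a0 n)"
proof -
  let ?M = "M_a0n a0 n"
  have cont_comp: "continuous_on UNIV (\<lambda>p :: ('a \<Rightarrow>\<^sub>L 'a) \<times> ('a \<Rightarrow>\<^sub>L 'a). fst p o\<^sub>L snd p)"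
    and cont_comp': "continuous_on UNIV (\<lambda>p :: ('a \<Rightarrow>\<^sub>L 'a) \<times> ('a \<Rightarrow>\<^sub>L 'a). snd p o\<^sub>L fst p)"
    by (intro continuous_intros)+
  have comp: "T o\<^sub>L U \<in> closure ?M" if "T \<in> closure ?M" "U \<in> closure ?M" for T U
    using closure_closed_under_binop[where f = "(o\<^sub>L)", OF cont_comp _ that]
      M_a0n_comp_closed[OF assms(2,4)] by blast
  have comm: "T o\<^sub>L U = U o\<^sub>L T" if "T \<in> closure ?M" "U \<in> closure ?M" for T U
    using closure_preserves_identity[where f = "(o\<^sub>L)" and g = "\<lambda>T U. U o\<^sub>L T",
        OF cont_comp cont_comp' _ that] M_a0n_commute[OF assms(1,2,4)] by blast
  show ?thesis
    unfolding comm_banach_subalgebra_def S_n_def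
    using closure_subspace[OF M_a0n_subspace] comp comm by blast
qed

end
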